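(* Let $(X,+,d)$ be a complete, locally compact Abelian metric group with translation-invariant metric $d$. Then the spectre operator $S:K(X)\to K(X)$ is upper-semicontinuous at every $A\in K(X)$; that is, for every $A\in K(X)$ and every $\varepsilon>0$ there exists $\delta>0$ such that for all $B\in K(X)$ with $d_H(A,B)<\delta$ we have $S(B)\subset S(A)_\varepsilon$.
   Context: $d$ satisfies $d(x,y)=d(x+z,y+z)$ for all $x,y,z\in X$. $K(X)$ is the family of non-empty compact subsets of $X$ with the Pompeiu–Hausdorff metric $d_H(A,B)=\max\{\sup_{a\in A}d(a,B),\sup_{b\in B}d(A,b)\}$. For $C\subset X$, $C_\varepsilon:=\{x\in X:\ \exists_{c\in C}\ d(x,c)<\varepsilon\}$. The spectre of $A\subset X$ is $S(A):=\{z\in X:\ \forall_{a\in A}\ (a+z\in A \text{ or } a-z\in A)\}$; it is compact for compact non-empty $A$. *)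

theory Defs
  imports "HOL-Analysis.Analysis"
begin

text \<open>Pompeiu--Hausdorff distance (used on non-empty compact sets).\<close>
definition hausdorff_dist :: "'a::metric_space set \<Rightarrow> 'a set \<Rightarrow> real" where
  "hausdorff_dist A B = max (SUP a\<in>A. infdist a B) (SUP b\<in>B. infdist b A)"

definition nbhd :: "'a::metric_space set \<Rightarrow> real \<Rightarrow> 'a set" where
  "nbhd C \<epsilon> = {x. \<exists>c\<in>C. dist x c < \<epsilon>}"

definition spectre :: "'a::ab_group_add set \<Rightarrow> 'a set" where
  "spectre A = {z. \<forall>a\<in>A. a + z \<in> A \<or> a - z \<in> A}"

end

theory Submission
  imports Defs
begin

text \<open>
  Every element of the spectre of B is a difference of two points of B, so when B is
  Hausdorff-close to A the spectre of B lies near the compact set A - A. Moreover, the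
  defining property of the spectre passes to limits: if z is in S(B) and a in A, pick b in B
  near a; one of b + z, b - z lies in B and hence near A, so one of a + w, a - w is within
  2 d_H(A,B) + d(w,z) of A. If S were not upper semicontinuous at A, a sequence z_n in S(B_n)
  staying \<epsilon> away from S(A) would have a subsequence converging to some w, and w would lie
  in S(A) by the limit argument, a contradiction.
\<close>

lemma dist_add_add_le:
  fixes x y x' y' :: "'a::{ab_group_add, metric_space}"
  assumes transl_inv: "\<And>x y z :: 'a. dist x y = dist (x + z) (y + z)"
  shows "dist (x + y) (x' + y') \<le> dist x x' + dist y y'"
proof -
  have "dist (x + y) (x' + y') \<le> dist (x + y) (x' + y) + dist (x' + y) (x' + y')"
    by (rule dist_triangle)
  also have "dist (x + y) (x' + y) = dist x x'"
    using transl_inv by metis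
  also have "dist (x' + y) (x' + y') = dist y y'"
    using transl_inv[of y y' x'] by (simp add: add.commute)
  finally show ?thesis .
qed

lemma dist_minus_minus:
  fixes x y :: "'a::{ab_group_add, metric_space}"
  assumes transl_inv: "\<And>x y z :: 'a. dist x y = dist (x + z) (y + z)"
  shows "dist (- x) (- y) = dist x y"
proof -
  have "dist (- x) (- y) = dist (- x + (x + y)) (- y + (x + y))"
    using transl_inv by metis
  also have "\<dots> = dist y x"
    by (simp add: algebra_simps)
  finally show ?thesis
    by (simp add: dist_commute)
qed

lemma dist_diff_diff_le:
  fixes x y x' y' :: "'a::{ab_group_add, metric_space}"
  assumes transl_inv: "\<And>x y z :: 'a. dist x y = dist (x + z) (y + z)"
  shows "dist (x - y) (x' - y') \<le> dist x x' + dist y y'"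
  using dist_add_add_le[OF transl_inv, of x "- y" x' "- y'"] dist_minus_minus[OF transl_inv, of y y']
  by simp

lemma tendsto_dist_bound:
  assumes "(f \<longlongrightarrow> l) F" "\<forall>\<^sub>F x in F. dist (g x) (f x) \<le> e x" "(e \<longlongrightarrow> 0) F"
  shows "(g \<longlongrightarrow> l) F"
proof (rule tendsto_dist_iff[THEN iffD2],
    rule tendsto_sandwich[where f = "\<lambda>_. 0" and h = "\<lambda>x. e x + dist (f x) l"])
  show "\<forall>\<^sub>F x in F. dist (g x) l \<le> e x + dist (f x) l"
    using assms(2) by eventually_elim (use dist_triangle[of _ l] in \<open>smt (verit)\<close>)
  show "((\<lambda>x. e x + dist (f x) l) \<longlongrightarrow> 0) F"
    using tendsto_add[OF assms(3) tendsto_dist[OF assms(1) tendsto_const[of l]]] by simp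
qed simp_all

lemma tendsto_diff_translation_invariant:
  fixes f g :: "'b \<Rightarrow> 'a::{ab_group_add, metric_space}"
  assumes transl_inv: "\<And>x y z :: 'a. dist x y = dist (x + z) (y + z)"
    and f: "(f \<longlongrightarrow> a) F" and g: "(g \<longlongrightarrow> b) F"
  shows "((\<lambda>x. f x - g x) \<longlongrightarrow> a - b) F"
proof (rule tendsto_dist_bound[OF tendsto_const])
  show "\<forall>\<^sub>F x in F. dist (f x - g x) (a - b) \<le> dist (f x) a + dist (g x) b"
    by (simp add: dist_diff_diff_le[OF transl_inv])
  show "((\<lambda>x. dist (f x) a + dist (g x) b) \<longlongrightarrow> 0) F"
    using tendsto_add[OF tendsto_dist[OF f tendsto_const[of a]]
        tendsto_dist[OF g tendsto_const[of b]]]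
    by simp
qed

lemma infdist_attained_compact:
  assumes "compact B" "B \<noteq> {}"
  obtains b where "b \<in> B" "infdist x B = dist x b"
  by (metis assms setdist_attains_inf infdist_eq_setdist infdist_singleton dist_commute)

lemma hausdorff_dist_commute: "hausdorff_dist A B = hausdorff_dist B A"
  unfolding hausdorff_dist_def by (simp add: max.commute)

lemma infdist_le_hausdorff_dist:
  assumes "compact A" "a \<in> A"
  shows "infdist a B \<le> hausdorff_dist A B"
proof -
  have "compact ((\<lambda>a. infdist a B) ` A)"
    by (intro compact_continuous_image continuous_intros assms)
  then have "bdd_above ((\<lambda>a. infdist a B) ` A)"
    by (simp add: bounded_imp_bdd_above compact_imp_bounded)
  then have "infdist a B \<le> (SUP a\<in>A. infdist a B)"
    using assms(2) by (rule cSUP_upper2) simp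
  also have "\<dots> \<le> hausdorff_dist A B"
    unfolding hausdorff_dist_def by simp
  finally show ?thesis .
qed

lemma hausdorff_dist_nonneg:
  assumes "compact A" "A \<noteq> {}"
  shows "0 \<le> hausdorff_dist A B"
  using assms infdist_le_hausdorff_dist infdist_nonneg by (metis all_not_in_conv order_trans)

lemma mem_spectre_imp_diff:
  assumes "z \<in> spectre B" "B \<noteq> {}"
  shows "\<exists>x\<in>B. \<exists>y\<in>B. z = x - y"
proof -
  obtain b where b: "b \<in> B"
    using assms(2) by blast
  then have "b + z \<in> B \<or> b - z \<in> B"
    using assms(1) unfolding spectre_def by blast
  moreover have "z = (b + z) - b" "z = b - (b - z)"
    by simp_all
  ultimately show ?thesis
    using b by blast
qed

lemma spectre_near_differences:
  fixes A B :: "'a::{ab_group_add, metric_space} set"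
  assumes transl_inv: "\<And>x y z :: 'a. dist x y = dist (x + z) (y + z)"
    and "compact A" "A \<noteq> {}" "compact B" "B \<noteq> {}" "z \<in> spectre B"
  shows "\<exists>p\<in>A. \<exists>q\<in>A. dist z (p - q) \<le> 2 * hausdorff_dist A B"
proof -
  obtain x y where xy: "x \<in> B" "y \<in> B" "z = x - y"
    using mem_spectre_imp_diff assms(5,6) by blast
  have near_A: "\<exists>p\<in>A. dist b p \<le> hausdorff_dist A B" if "b \<in> B" for b
    using infdist_attained_compact[OF assms(2,3), of b]
      infdist_le_hausdorff_dist[OF assms(4) that, of A]
    by (metis hausdorff_dist_commute)
  obtain p q where "p \<in> A" "q \<in> A"
    and "dist x p \<le> hausdorff_dist A B" "dist y q \<le> hausdorff_dist A B"
    using near_A xy(1,2) by blast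
  moreover have "dist z (p - q) \<le> dist x p + dist y q"
    unfolding xy(3) by (rule dist_diff_diff_le[OF transl_inv])
  ultimately have "dist z (p - q) \<le> 2 * hausdorff_dist A B"
    by linarith
  then show ?thesis
    using \<open>p \<in> A\<close> \<open>q \<in> A\<close> by blast
qed

text \<open>
  The left-hand side vanishes exactly when a + w or a - w lies in the closed set A, so this
  inequality is a quantitative form of the spectre condition for w at a.
\<close>
lemma spectre_defect_le:
  fixes A B :: "'a::{ab_group_add, metric_space} set"
  assumes transl_inv: "\<And>x y z :: 'a. dist x y = dist (x + z) (y + z)"
    and "compact A" "compact B" "B \<noteq> {}" "z \<in> spectre B" "a \<in> A"
  shows "min (infdist (a + w) A) (infdist (a - w) A) \<le> 2 * hausdorff_dist A B + dist w z"
proof -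
  obtain b where b: "b \<in> B" "infdist a B = dist a b"
    using infdist_attained_compact[OF assms(3,4)] by blast
  have dist_ab: "dist a b \<le> hausdorff_dist A B"
    using b(2) infdist_le_hausdorff_dist[OF assms(2,6), of B] by simp
  have close: "infdist c A \<le> hausdorff_dist A B" if "c \<in> B" for c
    using infdist_le_hausdorff_dist[OF assms(3) that] hausdorff_dist_commute by metis
  have near_A: "infdist x A \<le> 2 * hausdorff_dist A B + dist w z"
    if "y \<in> B" "dist x y \<le> dist a b + dist w z" for x y
    using infdist_triangle[of x A y] close[OF that(1)] that(2) dist_ab by linarith
  have "b + z \<in> B \<or> b - z \<in> B"
    using assms(5) b(1) unfolding spectre_def by blast
  then show ?thesis
    using near_A[of "b + z" "a + w"] near_A[of "b - z" "a - w"]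
      dist_add_add_le[OF transl_inv, of a w b z] dist_diff_diff_le[OF transl_inv, of a w b z]
    by (auto simp: min_le_iff_disj)
qed

lemma limit_in_spectre:
  fixes A :: "'a::{ab_group_add, metric_space} set"
  assumes transl_inv: "\<And>x y z :: 'a. dist x y = dist (x + z) (y + z)"
    and A: "compact A" "A \<noteq> {}"
    and B: "\<And>n. compact (B n)" "\<And>n. B n \<noteq> {}" "(\<lambda>n. hausdorff_dist A (B n)) \<longlonglongrightarrow> 0"
    and z: "\<And>n. z n \<in> spectre (B n)" "z \<longlonglongrightarrow> w"
  shows "w \<in> spectre A"
  unfolding spectre_def
proof (intro CollectI ballI)
  fix a assume "a \<in> A"
  have "(\<lambda>n. 2 * hausdorff_dist A (B n) + dist w (z n)) \<longlonglongrightarrow> 2 * 0 + dist w w"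
    using z(2) by (intro tendsto_intros B(3))
  then have "min (infdist (a + w) A) (infdist (a - w) A) \<le> 0"
    using spectre_defect_le[OF transl_inv A(1) B(1,2) z(1) \<open>a \<in> A\<close>]
    by (intro LIMSEQ_le_const) auto
  then have "infdist (a + w) A = 0 \<or> infdist (a - w) A = 0"
    by (auto simp: min_le_iff_disj intro: order_antisym infdist_nonneg)
  then show "a + w \<in> A \<or> a - w \<in> A"
    using in_closed_iff_infdist_zero[OF compact_imp_closed[OF A(1)] A(2)] by blast
qed

lemma spectre_seq_convergent_subseq:
  fixes A :: "'a::{ab_group_add, metric_space} set"
  assumes transl_inv: "\<And>x y z :: 'a. dist x y = dist (x + z) (y + z)"
    and A: "compact A" "A \<noteq> {}"
    and B: "\<And>n. compact (B n)" "\<And>n. B n \<noteq> {}" "(\<lambda>n. hausdorff_dist A (B n)) \<longlonglongrightarrow> 0"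
    and z: "\<And>n. z n \<in> spectre (B n)"
  obtains r w where "strict_mono r" "w \<in> spectre A" "(z \<circ> r) \<longlonglongrightarrow> w"
proof -
  obtain p q where pq: "\<And>n. p n \<in> A" "\<And>n. q n \<in> A"
    "\<And>n. dist (z n) (p n - q n) \<le> 2 * hausdorff_dist A (B n)"
    using spectre_near_differences[OF transl_inv A B(1,2) z] by metis
  obtain l r where r: "strict_mono r" and lim: "((\<lambda>n. (p n, q n)) \<circ> r) \<longlonglongrightarrow> l"
    using seq_compactE[OF compact_imp_seq_compact[OF compact_Times[OF A(1) A(1)]]] pq(1,2)
    by (metis mem_Times_iff fst_conv snd_conv)
  obtain u v where l: "l = (u, v)"
    by (cases l)
  have diff_lim: "(\<lambda>n. p (r n) - q (r n)) \<longlonglongrightarrow> u - v"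
    using tendsto_fst[OF lim] tendsto_snd[OF lim] unfolding l
    by (intro tendsto_diff_translation_invariant[OF transl_inv]) (simp_all add: o_def)
  have hd_lim: "(\<lambda>n. hausdorff_dist A (B (r n))) \<longlonglongrightarrow> 0"
    using LIMSEQ_subseq_LIMSEQ[OF B(3) r] by (simp add: o_def)
  have "(z \<circ> r) \<longlonglongrightarrow> u - v"
    unfolding o_def
    by (rule tendsto_dist_bound[OF diff_lim _ tendsto_mult_right_zero[OF hd_lim, of 2]])
      (use pq(3) in simp)
  moreover have "u - v \<in> spectre A"
    using limit_in_spectre[OF transl_inv A, of "B \<circ> r" "z \<circ> r"]
      B z hd_lim \<open>(z \<circ> r) \<longlonglongrightarrow> u - v\<close>
    by (simp add: o_def)
  ultimately show thesis
    using that r by blast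
qed

theorem theorem3p12:
  assumes transl_inv: "\<And>x y z :: 'a::{ab_group_add, metric_space}. dist x y = dist (x + z) (y + z)"
    and complete_X: "complete (UNIV :: 'a set)"
    and loc_compact: "locally compact (UNIV :: 'a set)"
    and A_cpt: "compact A" and A_ne: "A \<noteq> {}"
    and eps_pos: "\<epsilon> > 0"
  shows "\<exists>\<delta>>0. \<forall>B::'a set. compact B \<and> B \<noteq> {} \<and> hausdorff_dist A B < \<delta> \<longrightarrow>
           spectre B \<subseteq> nbhd (spectre A) \<epsilon>"
proof (rule ccontr)
  assume "\<not> ?thesis"
  then have "\<forall>\<delta>>0. \<exists>B. compact B \<and> B \<noteq> {} \<and> hausdorff_dist A B < \<delta> \<and>
      (\<exists>z\<in>spectre B. \<forall>s\<in>spectre A. \<epsilon> \<le> dist z s)"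
    unfolding nbhd_def by (auto simp: subset_iff not_less) (meson not_le)
  then have "\<exists>B z. compact B \<and> B \<noteq> {} \<and> hausdorff_dist A B < 1 / Suc n \<and>
      z \<in> spectre B \<and> (\<forall>s\<in>spectre A. \<epsilon> \<le> dist z s)" for n
    by (metis of_nat_0_less_iff zero_less_Suc zero_less_divide_1_iff)
  then obtain B z where B: "\<And>n. compact (B n)" "\<And>n. B n \<noteq> {}"
      "\<And>n. hausdorff_dist A (B n) < 1 / Suc n"
    and z: "\<And>n. z n \<in> spectre (B n)" "\<And>n s. s \<in> spectre A \<Longrightarrow> \<epsilon> \<le> dist (z n) s"
    by metis
  have "(\<lambda>n. 1 / real (Suc n)) \<longlonglongrightarrow> 0"
    using LIMSEQ_inverse_real_of_nat by (simp add: inverse_eq_divide)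
  then have hd_lim: "(\<lambda>n. hausdorff_dist A (B n)) \<longlonglongrightarrow> 0"
    by (rule tendsto_sandwich[rotated 2, OF tendsto_const])
      (use B(3) hausdorff_dist_nonneg[OF A_cpt A_ne] in \<open>simp_all add: less_imp_le\<close>)
  obtain r w where "w \<in> spectre A" "(z \<circ> r) \<longlonglongrightarrow> w"
    by (rule spectre_seq_convergent_subseq[OF transl_inv A_cpt A_ne, where B = B and z = z])
      (use B z hd_lim in auto)
  then have "\<forall>\<^sub>F n in sequentially. dist ((z \<circ> r) n) w < \<epsilon>"
    using eps_pos by (blast intro: tendstoD)
  then obtain N where "dist (z (r N)) w < \<epsilon>"
    unfolding eventually_sequentially by auto
  then show False
    using z(2)[OF \<open>w \<in> spectre A\<close>, of "r N"] by linarith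
qed

end
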